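(* For a fixed discrete memoryless MAC $p(y|x_1,x_2)$, define for $C_1,C_2\ge 0$ $$f_\ell(C_1,C_2)=\max_{p(u,x_1,x_2)}\min\left\{\begin{array}{l} C_1+C_2-I(X_1;X_2|U),\\ C_2+I(X_1;Y|X_2U),\\ C_1+I(X_2;Y|X_1U),\\ \tfrac12\big(C_1+C_2+I(X_1X_2;Y|U)-I(X_1;X_2|U)\big),\\ I(X_1X_2;Y)\end{array}\right\},$$ where the maximum is over pmfs $p(u,x_1,x_2)$ on $\mathcal U\times\mathcal X_1\times\mathcal X_2$ with $U$ taking values in a finite set with $|\mathcal{U}|\le \min\{|\mathcal{X}_1||\mathcal{X}_2|+3,|\mathcal{Y}|+4\}$, and the information quantities are evaluated for $p(u,x_1,x_2)p(y|x_1,x_2)$. Then $f_\ell$ is concave in $(C_1,C_2)$.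
   Context: $f_\ell(C_1,C_2)$ is the achievable rate (lower bound on capacity) of a two-relay diamond network whose broadcast part consists of two orthogonal error-free bit-pipes of capacities $C_1,C_2$ and whose second hop is the MAC $p(y|x_1,x_2)$ with finite alphabets $\mathcal X_1,\mathcal X_2,\mathcal Y$. Logarithms are base 2. *)

theory Defs
  imports "HOL-Analysis.Analysis"
begin

text \<open>A joint pmf is given as a nonnegative function P on a finite sample space Om.
  Note log 2 0 = 0 in Isabelle, so terms with zero probability vanish.\<close>

definition marg :: "'w set \<Rightarrow> ('w \<Rightarrow> real) \<Rightarrow> ('w \<Rightarrow> 'v) \<Rightarrow> 'v \<Rightarrow> real" where
  "marg Om P g v = (\<Sum>w\<in>{w\<in>Om. g w = v}. P w)"

definition cmi :: "'w set \<Rightarrow> ('w \<Rightarrow> real) \<Rightarrow> ('w \<Rightarrow> 'a) \<Rightarrow> ('w \<Rightarrow> 'b) \<Rightarrow> ('w \<Rightarrow> 'c) \<Rightarrow> real" where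
  "cmi Om P A B C =
    (\<Sum>(a,b,c)\<in>(\<lambda>w. (A w, B w, C w)) ` Om.
       marg Om P (\<lambda>w. (A w, B w, C w)) (a,b,c) *
       log 2 (marg Om P (\<lambda>w. (A w, B w, C w)) (a,b,c) * marg Om P C c /
              (marg Om P (\<lambda>w. (A w, C w)) (a,c) * marg Om P (\<lambda>w. (B w, C w)) (b,c))))"

definition mi :: "'w set \<Rightarrow> ('w \<Rightarrow> real) \<Rightarrow> ('w \<Rightarrow> 'a) \<Rightarrow> ('w \<Rightarrow> 'b) \<Rightarrow> real" where
  "mi Om P A B = cmi Om P A B (\<lambda>_. ())"

definition is_mac :: "('x1::finite \<Rightarrow> 'x2::finite \<Rightarrow> 'y::finite \<Rightarrow> real) \<Rightarrow> bool" where
  "is_mac W \<longleftrightarrow> (\<forall>x1 x2 y. W x1 x2 y \<ge> 0) \<and> (\<forall>x1 x2. (\<Sum>y\<in>UNIV. W x1 x2 y) = 1)"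

definition U_bound :: "('x1::finite \<Rightarrow> 'x2::finite \<Rightarrow> 'y::finite \<Rightarrow> real) \<Rightarrow> nat" where
  "U_bound W = min (CARD('x1) * CARD('x2) + 3) (CARD('y) + 4)"

definition is_pmf_ux :: "nat \<Rightarrow> (nat \<Rightarrow> 'x1::finite \<Rightarrow> 'x2::finite \<Rightarrow> real) \<Rightarrow> bool" where
  "is_pmf_ux k p \<longleftrightarrow> (\<forall>u x1 x2. p u x1 x2 \<ge> 0) \<and> (\<forall>u x1 x2. u \<ge> k \<longrightarrow> p u x1 x2 = 0)
     \<and> (\<Sum>u<k. \<Sum>x1\<in>UNIV. \<Sum>x2\<in>UNIV. p u x1 x2) = 1"

definition Om :: "nat \<Rightarrow> (nat \<times> 'x1::finite \<times> 'x2::finite \<times> 'y::finite) set" where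
  "Om k = {..<k} \<times> UNIV"

definition jointP :: "(nat \<Rightarrow> 'x1 \<Rightarrow> 'x2 \<Rightarrow> real) \<Rightarrow> ('x1 \<Rightarrow> 'x2 \<Rightarrow> 'y \<Rightarrow> real)
    \<Rightarrow> nat \<times> 'x1 \<times> 'x2 \<times> 'y \<Rightarrow> real" where
  "jointP p W = (\<lambda>(u,x1,x2,y). p u x1 x2 * W x1 x2 y)"

definition vU :: "nat \<times> 'x1 \<times> 'x2 \<times> 'y \<Rightarrow> nat" where "vU = (\<lambda>(u,x1,x2,y). u)"
definition vX1 :: "nat \<times> 'x1 \<times> 'x2 \<times> 'y \<Rightarrow> 'x1" where "vX1 = (\<lambda>(u,x1,x2,y). x1)"
definition vX2 :: "nat \<times> 'x1 \<times> 'x2 \<times> 'y \<Rightarrow> 'x2" where "vX2 = (\<lambda>(u,x1,x2,y). x2)"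
definition vY :: "nat \<times> 'x1 \<times> 'x2 \<times> 'y \<Rightarrow> 'y" where "vY = (\<lambda>(u,x1,x2,y). y)"

definition f_obj :: "('x1::finite \<Rightarrow> 'x2::finite \<Rightarrow> 'y::finite \<Rightarrow> real) \<Rightarrow> nat
     \<Rightarrow> (nat \<Rightarrow> 'x1 \<Rightarrow> 'x2 \<Rightarrow> real) \<Rightarrow> real \<Rightarrow> real \<Rightarrow> real" where
  "f_obj W k p C1 C2 =
    (let S = (Om k :: (nat \<times> 'x1 \<times> 'x2 \<times> 'y) set); P = jointP p W;
         I12U = cmi S P vX1 vX2 vU;
         I1Y = cmi S P vX1 vY (\<lambda>w. (vX2 w, vU w));
         I2Y = cmi S P vX2 vY (\<lambda>w. (vX1 w, vU w));
         I12YU = cmi S P (\<lambda>w. (vX1 w, vX2 w)) vY vU;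
         I12Y = mi S P (\<lambda>w. (vX1 w, vX2 w)) vY
     in Min {C1 + C2 - I12U, C2 + I1Y, C1 + I2Y, (C1 + C2 + I12YU - I12U) / 2, I12Y})"

text \<open>f_l(C1,C2): maximum (supremum, attained) over pmfs p(u,x1,x2) with
  U ranging over a finite set {..<k}, 1 \<le> k \<le> U_bound.\<close>
definition f_l :: "('x1::finite \<Rightarrow> 'x2::finite \<Rightarrow> 'y::finite \<Rightarrow> real) \<Rightarrow> real \<times> real \<Rightarrow> real" where
  "f_l W C = Sup {f_obj W k p (fst C) (snd C) | k p. 1 \<le> k \<and> k \<le> U_bound W \<and> is_pmf_ux k p}"

end

theory Submission
  imports Defs
begin

text \<open>Cut \<open>p(u,x1,x2)\<close> into its slices \<open>p(u,\<cdot>,\<cdot>)\<close>. The four informations conditioned on \<open>U\<close> are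
  sums of positively homogeneous functions of the slices, and \<open>I(X1X2;Y)\<close> depends only on the
  input marginal, on which it is concave. Time sharing between two pmfs (the disjoint union of
  their \<open>U\<close>-alphabets, weighted by \<open>l\<close> and \<open>1 - l\<close>) therefore achieves at least the convex
  combination of the two objectives, because every argument of the minimum is affine in the
  capacities and these sums. The larger alphabet is then cut down in Caratheodory fashion: reweighting
  the slices so that the input marginal (or the output distribution together with \<open>H(Y|X1X2)\<close>) and
  three combinations of the slice terms are preserved, while the sum of the \<open>I(X1;X2|U)\<close>-terms does
  not grow, never lowers the objective and leaves at most \<open>min(|X1||X2| + 3, |Y| + 4)\<close> slices.\<close>

section \<open>Conditional mutual information of finite joint pmfs\<close>

lemma marg_comp:
  assumes "finite S"
  shows "marg S P (\<lambda>w. f (g w)) v = (\<Sum>t\<in>{t\<in>g ` S. f t = v}. marg S P g t)"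
proof -
  have "(\<Sum>t\<in>{t\<in>g ` S. f t = v}. marg S P g t)
      = (\<Sum>t\<in>{t\<in>g ` S. f t = v}. sum P {w \<in> {w\<in>S. f (g w) = v}. g w = t})"
    unfolding marg_def by (rule sum.cong) (auto intro!: sum.cong)
  also have "\<dots> = sum P {w\<in>S. f (g w) = v}"
    by (rule sum.group) (use assms in auto)
  finally show ?thesis unfolding marg_def by simp
qed

lemma marg_pushforward:
  assumes "finite S"
  shows "marg S P (\<lambda>w. G (\<phi> w)) v = marg (\<phi> ` S) (marg S P \<phi>) G v"
  unfolding marg_comp[OF assms] by (simp add: marg_def[of "\<phi> ` S"])

lemma cmi_pushforward:
  assumes "finite S"
  shows "cmi S P (\<lambda>w. A (\<phi> w)) (\<lambda>w. B (\<phi> w)) (\<lambda>w. C (\<phi> w))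
       = cmi (\<phi> ` S) (marg S P \<phi>) A B C"
proof -
  have "(\<lambda>w. (A (\<phi> w), B (\<phi> w), C (\<phi> w))) ` S = (\<lambda>r. (A r, B r, C r)) ` (\<phi> ` S)"
    by (simp add: image_image)
  then show ?thesis
    unfolding cmi_def
    using marg_pushforward[OF assms, of P "\<lambda>r. (A r, B r, C r)" \<phi>]
      marg_pushforward[OF assms, of P "\<lambda>r. (A r, C r)" \<phi>]
      marg_pushforward[OF assms, of P "\<lambda>r. (B r, C r)" \<phi>]
      marg_pushforward[OF assms, of P C \<phi>]
    by simp
qed

lemma marg_cong:
  "(\<And>w. w \<in> S \<Longrightarrow> P w = Q w) \<Longrightarrow> marg S P g v = marg S Q g v"
  unfolding marg_def by (intro sum.cong) auto

lemma cmi_cong: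
  "(\<And>w. w \<in> S \<Longrightarrow> P w = Q w) \<Longrightarrow> cmi S P A B C = cmi S Q A B C"
  unfolding cmi_def by (simp add: marg_cong[of S P Q])

lemma marg_inj_comp:
  assumes "inj_on k (g ` S)" "v \<in> g ` S"
  shows "marg S P (\<lambda>w. k (g w)) (k v) = marg S P g v"
proof -
  have "{w \<in> S. k (g w) = k v} = {w \<in> S. g w = v}"
    using assms by (auto dest: inj_onD)
  then show ?thesis unfolding marg_def by simp
qed

lemma cmi_inj_cond:
  assumes "inj_on h (C ` S)"
  shows "cmi S P A B (\<lambda>w. h (C w)) = cmi S P A B C"
proof -
  let ?T = "(\<lambda>w. (A w, B w, C w)) ` S"
  let ?\<psi> = "\<lambda>(a,b,c). (a,b,h c)"
  have img: "(\<lambda>w. (A w, B w, h (C w))) ` S = ?\<psi> ` ?T"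
    by (auto simp: image_image)
  have inj: "inj_on ?\<psi> ?T"
    using assms by (auto simp: inj_on_def)
  have i1: "inj_on (\<lambda>(a,c). (a, h c)) ((\<lambda>w. (A w, C w)) ` S)"
    and i2: "inj_on (\<lambda>(a,c). (a, h c)) ((\<lambda>w. (B w, C w)) ` S)"
    using assms by (auto simp: inj_on_def)
  have "marg S P (\<lambda>w. (A w, B w, h (C w))) (A w, B w, h (C w))
        = marg S P (\<lambda>w. (A w, B w, C w)) (A w, B w, C w)"
    "marg S P (\<lambda>w. (A w, h (C w))) (A w, h (C w)) = marg S P (\<lambda>w. (A w, C w)) (A w, C w)"
    "marg S P (\<lambda>w. (B w, h (C w))) (B w, h (C w)) = marg S P (\<lambda>w. (B w, C w)) (B w, C w)"
    "marg S P (\<lambda>w. h (C w)) (h (C w)) = marg S P C (C w)" if "w \<in> S" for w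
    using marg_inj_comp[OF inj, of "(A w, B w, C w)" P] marg_inj_comp[OF i1, of "(A w, C w)" P]
      marg_inj_comp[OF i2, of "(B w, C w)" P] marg_inj_comp[OF assms, of "C w" P] that
    by auto
  then show ?thesis
    unfolding cmi_def img sum.reindex[OF inj]
    by (intro sum.cong) auto
qed

lemma marg_scale: "marg S (\<lambda>w. c * P w) g v = c * marg S P g v"
  unfolding marg_def by (simp add: sum_distrib_left)

lemma cmi_scale:
  assumes "c \<ge> 0"
  shows "cmi S (\<lambda>w. c * P w) A B C = c * cmi S P A B C"
proof (cases "c = 0")
  case True then show ?thesis by (simp add: cmi_def marg_def)
next
  case False
  have "\<And>x y z t::real. (c*x) * (c*y) / ((c*z) * (c*t)) = x*y/(z*t)"
    using False by (simp add: field_simps)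
  then show ?thesis unfolding cmi_def marg_scale sum_distrib_left
    by (intro sum.cong) (auto simp: split_def)
qed

lemma cmi_UN_separated:
  assumes fin: "finite K" "\<And>u. u \<in> K \<Longrightarrow> finite (S u)"
    and sep: "\<And>u w. u \<in> K \<Longrightarrow> w \<in> S u \<Longrightarrow> \<pi> (C w) = u"
  shows "cmi (\<Union>u\<in>K. S u) P A B C = (\<Sum>u\<in>K. cmi (S u) P A B C)"
proof -
  let ?g = "\<lambda>w. (A w, B w, C w)"
  have block: "w' \<in> S u" if "u \<in> K" "w \<in> S u" "w' \<in> (\<Union>u\<in>K. S u)" "C w' = C w" for u w w'
    using that sep by (metis UN_E)
  have restrict: "marg (\<Union>u\<in>K. S u) P F (F w) = marg (S u) P F (F w)"
    if "u \<in> K" "w \<in> S u" "\<And>x y. F x = F y \<Longrightarrow> C x = C y" for F u w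
  proof -
    have "{w' \<in> (\<Union>u\<in>K. S u). F w' = F w} = {w' \<in> S u. F w' = F w}"
      using that block[OF that(1,2)] by blast
    then show ?thesis unfolding marg_def by simp
  qed
  have disj: "?g ` S u \<inter> ?g ` S u' = {}" if "u \<in> K" "u' \<in> K" "u \<noteq> u'" for u u'
  proof -
    have "C w \<noteq> C w'" if "w \<in> S u" "w' \<in> S u'" for w w'
      using sep[of u w] sep[of u' w'] that \<open>u \<in> K\<close> \<open>u' \<in> K\<close> \<open>u \<noteq> u'\<close> by metis
    then show ?thesis by auto
  qed
  have "marg (\<Union>u\<in>K. S u) P ?g (?g w) = marg (S u) P ?g (?g w)"
    "marg (\<Union>u\<in>K. S u) P (\<lambda>w. (A w, C w)) (A w, C w) = marg (S u) P (\<lambda>w. (A w, C w)) (A w, C w)"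
    "marg (\<Union>u\<in>K. S u) P (\<lambda>w. (B w, C w)) (B w, C w) = marg (S u) P (\<lambda>w. (B w, C w)) (B w, C w)"
    "marg (\<Union>u\<in>K. S u) P C (C w) = marg (S u) P C (C w)" if "u \<in> K" "w \<in> S u" for u w
    using restrict[OF that, of ?g] restrict[OF that, of "\<lambda>w. (A w, C w)"]
      restrict[OF that, of "\<lambda>w. (B w, C w)"] restrict[OF that, of C] by auto
  then show ?thesis
    unfolding cmi_def image_UN
    by (subst sum.UNION_disjoint) (use fin disj in \<open>auto intro!: sum.cong\<close>)
qed

lemma cmi_slice:
  assumes "finite R"
  shows "cmi ({u} \<times> R) P A B C = cmi R (\<lambda>r. P (u,r)) (\<lambda>r. A (u,r)) (\<lambda>r. B (u,r)) (\<lambda>r. C (u,r))"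
proof -
  have "marg R (\<lambda>r. P (u,r)) (Pair u) w = P w" if "w \<in> Pair u ` R" for w
  proof -
    from that obtain r where "w = (u,r)" "r \<in> R" by auto
    moreover have "{x \<in> R. (u, x) = (u, r)} = {r}" if "r \<in> R" for r
      using that by auto
    ultimately show ?thesis by (auto simp: marg_def)
  qed
  then have "cmi (Pair u ` R) (marg R (\<lambda>r. P (u,r)) (Pair u)) A B C = cmi (Pair u ` R) P A B C"
    by (rule cmi_cong)
  moreover have "Pair u ` R = {u} \<times> R" by auto
  ultimately show ?thesis
    using cmi_pushforward[OF assms, of "\<lambda>r. P (u,r)" A "Pair u" B C] by simp
qed

section \<open>Slices along the auxiliary variable\<close>

text \<open>A slice \<open>s\<close> stands for \<open>p(u,\<cdot>,\<cdot>)\<close>; then \<open>slice_pmf W s\<close> is the unnormalised joint pmf of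
  \<open>(X1,X2,Y)\<close> on the event \<open>U = u\<close>.\<close>

type_synonym ('x1, 'x2) slice = "'x1 \<Rightarrow> 'x2 \<Rightarrow> real"

definition slice_pmf :: "('x1 \<Rightarrow> 'x2 \<Rightarrow> 'y \<Rightarrow> real) \<Rightarrow> ('x1, 'x2) slice \<Rightarrow> 'x1 \<times> 'x2 \<times> 'y \<Rightarrow> real"
  where "slice_pmf W s = (\<lambda>(x1,x2,y). s x1 x2 * W x1 x2 y)"

definition slice_cmi :: "('x1::finite \<Rightarrow> 'x2::finite \<Rightarrow> 'y::finite \<Rightarrow> real) \<Rightarrow> ('x1, 'x2) slice
    \<Rightarrow> ('x1 \<times> 'x2 \<times> 'y \<Rightarrow> 'a) \<Rightarrow> ('x1 \<times> 'x2 \<times> 'y \<Rightarrow> 'b) \<Rightarrow> ('x1 \<times> 'x2 \<times> 'y \<Rightarrow> 'c) \<Rightarrow> real"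
  where "slice_cmi W s A B C = cmi UNIV (slice_pmf W s) A B C"

abbreviation slice_I12 :: "('x1::finite \<Rightarrow> 'x2::finite \<Rightarrow> 'y::finite \<Rightarrow> real) \<Rightarrow> ('x1, 'x2) slice \<Rightarrow> real" where
  "slice_I12 W s \<equiv> slice_cmi W s (\<lambda>(x1,x2,y). x1) (\<lambda>(x1,x2,y). x2) (\<lambda>_. ())"
abbreviation slice_I1Y :: "('x1::finite \<Rightarrow> 'x2::finite \<Rightarrow> 'y::finite \<Rightarrow> real) \<Rightarrow> ('x1, 'x2) slice \<Rightarrow> real" where
  "slice_I1Y W s \<equiv> slice_cmi W s (\<lambda>(x1,x2,y). x1) (\<lambda>(x1,x2,y). y) (\<lambda>(x1,x2,y). x2)"
abbreviation slice_I2Y :: "('x1::finite \<Rightarrow> 'x2::finite \<Rightarrow> 'y::finite \<Rightarrow> real) \<Rightarrow> ('x1, 'x2) slice \<Rightarrow> real" where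
  "slice_I2Y W s \<equiv> slice_cmi W s (\<lambda>(x1,x2,y). x2) (\<lambda>(x1,x2,y). y) (\<lambda>(x1,x2,y). x1)"
abbreviation slice_I12Y :: "('x1::finite \<Rightarrow> 'x2::finite \<Rightarrow> 'y::finite \<Rightarrow> real) \<Rightarrow> ('x1, 'x2) slice \<Rightarrow> real" where
  "slice_I12Y W s \<equiv> slice_cmi W s (\<lambda>(x1,x2,y). (x1,x2)) (\<lambda>(x1,x2,y). y) (\<lambda>_. ())"

definition pos_homogeneous :: "(('x1, 'x2) slice \<Rightarrow> real) \<Rightarrow> bool" where
  "pos_homogeneous G \<longleftrightarrow> (\<forall>c s. c \<ge> 0 \<longrightarrow> G (\<lambda>a b. c * s a b) = c * G s)"

lemma pos_homogeneous_zero: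
  assumes "pos_homogeneous G"
  shows "G (\<lambda>a b. 0) = 0"
  using assms[unfolded pos_homogeneous_def, rule_format, of 0 "\<lambda>a b. 0"] by simp

lemma pos_homogeneous_slice_cmi: "pos_homogeneous (\<lambda>s. slice_cmi W s A B C)"
proof -
  have "slice_pmf W (\<lambda>a b. c * s a b) = (\<lambda>r. c * slice_pmf W s r)" for c s
    by (auto simp: slice_pmf_def fun_eq_iff)
  then show ?thesis
    unfolding pos_homogeneous_def slice_cmi_def by (simp add: cmi_scale)
qed

lemma cmi_jointP_given_U:
  fixes W :: "'x1::finite \<Rightarrow> 'x2::finite \<Rightarrow> 'y::finite \<Rightarrow> real"
  shows "cmi (Om k :: (nat \<times> 'x1 \<times> 'x2 \<times> 'y) set) (jointP p W) (\<lambda>w. A (snd w)) (\<lambda>w. B (snd w))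
      (\<lambda>w. (C (snd w), vU w)) = (\<Sum>u<k. slice_cmi W (p u) A B C)"
proof -
  have Om_UN: "Om k = (\<Union>u\<in>{..<k}. {u} \<times> (UNIV :: ('x1 \<times> 'x2 \<times> 'y) set))"
    by (auto simp: Om_def)
  have "cmi (Om k) (jointP p W) (\<lambda>w. A (snd w)) (\<lambda>w. B (snd w)) (\<lambda>w. (C (snd w), vU w))
      = (\<Sum>u<k. cmi ({u} \<times> UNIV) (jointP p W) (\<lambda>w. A (snd w)) (\<lambda>w. B (snd w)) (\<lambda>w. (C (snd w), vU w)))"
    unfolding Om_UN by (rule cmi_UN_separated[where \<pi> = snd]) (auto simp: vU_def)
  also have "\<dots> = (\<Sum>u<k. slice_cmi W (p u) A B C)"
  proof (rule sum.cong[OF refl])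
    fix u
    have "cmi ({u} \<times> UNIV) (jointP p W) (\<lambda>w. A (snd w)) (\<lambda>w. B (snd w)) (\<lambda>w. (C (snd w), vU w))
        = cmi UNIV (\<lambda>r. jointP p W (u, r)) A B (\<lambda>r. (C r, u))"
      by (simp add: cmi_slice vU_def)
    also have "(\<lambda>r. jointP p W (u, r)) = slice_pmf W (p u)"
      by (auto simp: jointP_def slice_pmf_def fun_eq_iff)
    also have "cmi UNIV (slice_pmf W (p u)) A B (\<lambda>r. (C r, u)) = slice_cmi W (p u) A B C"
      using cmi_inj_cond[of "\<lambda>c. (c, u)" C UNIV "slice_pmf W (p u)" A B]
      by (simp add: inj_on_def slice_cmi_def)
    finally show "cmi ({u} \<times> UNIV) (jointP p W) (\<lambda>w. A (snd w)) (\<lambda>w. B (snd w)) (\<lambda>w. (C (snd w), vU w))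
        = slice_cmi W (p u) A B C" .
  qed
  finally show ?thesis .
qed

lemma cmi_jointP_marginal:
  fixes W :: "'x1::finite \<Rightarrow> 'x2::finite \<Rightarrow> 'y::finite \<Rightarrow> real"
  assumes "k \<ge> 1"
  shows "cmi (Om k :: (nat \<times> 'x1 \<times> 'x2 \<times> 'y) set) (jointP p W) (\<lambda>w. A (snd w)) (\<lambda>w. B (snd w))
      (\<lambda>w. C (snd w)) = slice_cmi W (\<lambda>a b. \<Sum>u<k. p u a b) A B C"
proof -
  let ?S = "Om k :: (nat \<times> 'x1 \<times> 'x2 \<times> 'y) set"
  have "r \<in> snd ` ?S" for r
    using rev_image_eqI[of "(0, r)" ?S r snd] assms by (simp add: Om_def)
  then have "snd ` ?S = UNIV" by blast
  moreover have "marg ?S (jointP p W) snd = slice_pmf W (\<lambda>a b. \<Sum>u<k. p u a b)"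
  proof
    fix r
    have "{w \<in> ?S. snd w = r} = (\<lambda>u. (u, r)) ` {..<k}" by (auto simp: Om_def)
    then show "marg ?S (jointP p W) snd r = slice_pmf W (\<lambda>a b. \<Sum>u<k. p u a b) r"
      by (simp add: marg_def sum.reindex inj_on_def jointP_def slice_pmf_def sum_distrib_right
          split: prod.split)
  qed
  ultimately show ?thesis
    using cmi_pushforward[of ?S "jointP p W" A snd B C] by (simp add: Om_def slice_cmi_def)
qed

definition rate_min :: "real \<Rightarrow> real \<Rightarrow> real \<Rightarrow> real \<Rightarrow> real \<Rightarrow> real \<Rightarrow> real \<Rightarrow> real" where
  "rate_min C1 C2 i12 i1y i2y i12y t = Min {C1 + C2 - i12, C2 + i1y, C1 + i2y, (C1 + C2 + i12y - i12) / 2, t}"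

lemma rate_min_eq: "rate_min C1 C2 i12 i1y i2y i12y t =
   min (C1 + C2 - i12) (min (C2 + i1y) (min (C1 + i2y) (min ((C1 + C2 + i12y - i12) / 2) t)))"
  unfolding rate_min_def by simp

lemma rate_min_le: "rate_min C1 C2 i12 i1y i2y i12y t \<le> t"
  unfolding rate_min_eq by simp

lemma rate_min_mono:
  assumes "i12' \<le> i12" "i1y \<le> i1y'" "i2y \<le> i2y'" "i12y - i12 \<le> i12y' - i12'" "t \<le> t'"
  shows "rate_min C1 C2 i12 i1y i2y i12y t \<le> rate_min C1 C2 i12' i1y' i2y' i12y' t'"
  unfolding rate_min_eq using assms by (intro min.mono) (auto simp: divide_right_mono)

text \<open>Every argument of the minimum is affine in \<open>(C1, C2, i12, i1y, i2y, i12y, t)\<close>.\<close>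

lemma rate_min_concave:
  assumes l: "0 \<le> l" "l \<le> 1" and t: "l * t + (1 - l) * t' \<le> t''"
  shows "l * rate_min C1 C2 i12 i1y i2y i12y t + (1 - l) * rate_min C1' C2' i12' i1y' i2y' i12y' t'
    \<le> rate_min (l * C1 + (1 - l) * C1') (l * C2 + (1 - l) * C2') (l * i12 + (1 - l) * i12')
         (l * i1y + (1 - l) * i1y') (l * i2y + (1 - l) * i2y') (l * i12y + (1 - l) * i12y') t''"
proof -
  let ?A = "rate_min C1 C2 i12 i1y i2y i12y t" and ?B = "rate_min C1' C2' i12' i1y' i2y' i12y' t'"
  have comb: "l * X + (1 - l) * Y \<le> l * X' + (1 - l) * Y'" if "X \<le> X'" "Y \<le> Y'" for X Y X' Y' :: real
    using mult_left_mono[OF that(1) l(1)] mult_left_mono[OF that(2), of "1 - l"] l(2) by simp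
  have "?A \<le> C1 + C2 - i12" "?A \<le> C2 + i1y" "?A \<le> C1 + i2y" "?A \<le> (C1 + C2 + i12y - i12) / 2"
    "?A \<le> t" "?B \<le> C1' + C2' - i12'" "?B \<le> C2' + i1y'" "?B \<le> C1' + i2y'"
    "?B \<le> (C1' + C2' + i12y' - i12') / 2" "?B \<le> t'"
    unfolding rate_min_eq by linarith+
  from comb[OF this(1,6)] comb[OF this(2,7)] comb[OF this(3,8)] comb[OF this(4,9)] comb[OF this(5,10)] t
  show ?thesis
    unfolding rate_min_eq[of "l * C1 + (1 - l) * C1'"]
    by (simp add: algebra_simps add_divide_distrib diff_divide_distrib)
qed

lemma f_obj_eq_rate_min:
  fixes W :: "'x1::finite \<Rightarrow> 'x2::finite \<Rightarrow> 'y::finite \<Rightarrow> real"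
  assumes "k \<ge> 1"
  shows "f_obj W k p C1 C2 = rate_min C1 C2 (\<Sum>u<k. slice_I12 W (p u)) (\<Sum>u<k. slice_I1Y W (p u))
      (\<Sum>u<k. slice_I2Y W (p u)) (\<Sum>u<k. slice_I12Y W (p u)) (slice_I12Y W (\<lambda>a b. \<Sum>u<k. p u a b))"
proof -
  let ?S = "Om k :: (nat \<times> 'x1 \<times> 'x2 \<times> 'y) set" and ?P = "jointP p W"
  have vars: "vX1 = (\<lambda>w. fst (snd w))" "vX2 = (\<lambda>w. fst (snd (snd w)))" "vY = (\<lambda>w. snd (snd (snd w)))"
    by (auto simp: vX1_def vX2_def vY_def)
  have unit_U: "cmi ?S ?P A B vU = cmi ?S ?P A B (\<lambda>w. ((), vU w))" for A :: "_ \<Rightarrow> 'a" and B :: "_ \<Rightarrow> 'b"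
    using cmi_inj_cond[of snd "\<lambda>w. ((), vU w)" ?S ?P A B] by (simp add: inj_on_def)
  show ?thesis
    unfolding f_obj_def Let_def rate_min_def mi_def
    using cmi_jointP_given_U[of k p W "\<lambda>(x1,x2,y). x1" "\<lambda>(x1,x2,y). x2" "\<lambda>_. ()"]
      cmi_jointP_given_U[of k p W "\<lambda>(x1,x2,y). x1" "\<lambda>(x1,x2,y). y" "\<lambda>(x1,x2,y). x2"]
      cmi_jointP_given_U[of k p W "\<lambda>(x1,x2,y). x2" "\<lambda>(x1,x2,y). y" "\<lambda>(x1,x2,y). x1"]
      cmi_jointP_given_U[of k p W "\<lambda>(x1,x2,y). (x1,x2)" "\<lambda>(x1,x2,y). y" "\<lambda>_. ()"]
      cmi_jointP_marginal[OF assms, of p W "\<lambda>(x1,x2,y). (x1,x2)" "\<lambda>(x1,x2,y). y" "\<lambda>_. ()"]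
    by (simp add: unit_U vars split_def)
qed

section \<open>The mutual information between channel input and output\<close>

definition mass :: "('x1::finite, 'x2::finite) slice \<Rightarrow> real" where
  "mass s = (\<Sum>a\<in>UNIV. \<Sum>b\<in>UNIV. s a b)"

definition out_pmf :: "('x1::finite \<Rightarrow> 'x2::finite \<Rightarrow> 'y \<Rightarrow> real) \<Rightarrow> ('x1, 'x2) slice \<Rightarrow> 'y \<Rightarrow> real"
  where "out_pmf W \<pi> y = (\<Sum>a\<in>UNIV. \<Sum>b\<in>UNIV. \<pi> a b * W a b y)"

definition neg_noise_entropy :: "('x1::finite \<Rightarrow> 'x2::finite \<Rightarrow> 'y::finite \<Rightarrow> real) \<Rightarrow> ('x1, 'x2) slice \<Rightarrow> real"
  where "neg_noise_entropy W \<pi> = (\<Sum>a\<in>UNIV. \<Sum>b\<in>UNIV. \<pi> a b * (\<Sum>y\<in>UNIV. W a b y * log 2 (W a b y)))"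

definition mac_info :: "('x1::finite \<Rightarrow> 'x2::finite \<Rightarrow> 'y::finite \<Rightarrow> real) \<Rightarrow> ('x1, 'x2) slice \<Rightarrow> real"
  where "mac_info W \<pi> = neg_noise_entropy W \<pi> - (\<Sum>y\<in>UNIV. out_pmf W \<pi> y * log 2 (out_pmf W \<pi> y))"

lemma mass_sum: "mass (\<lambda>a b. \<Sum>u\<in>I. \<beta> u * q u a b) = (\<Sum>u\<in>I. \<beta> u * mass (q u))"
  unfolding mass_def by (simp add: sum_distrib_left sum.swap[of _ I])

lemma out_pmf_sum: "out_pmf W (\<lambda>a b. \<Sum>u\<in>I. \<beta> u * q u a b) y = (\<Sum>u\<in>I. \<beta> u * out_pmf W (q u) y)"
  unfolding out_pmf_def by (simp add: sum_distrib_right sum_distrib_left sum.swap[of _ I] mult.assoc)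

lemma neg_noise_entropy_sum:
  "neg_noise_entropy W (\<lambda>a b. \<Sum>u\<in>I. \<beta> u * q u a b) = (\<Sum>u\<in>I. \<beta> u * neg_noise_entropy W (q u))"
  unfolding neg_noise_entropy_def
  by (simp add: sum_distrib_right sum_distrib_left sum.swap[of _ I] mult.assoc)

lemma out_pmf_nonneg: "is_mac W \<Longrightarrow> (\<And>a b. \<pi> a b \<ge> 0) \<Longrightarrow> out_pmf W \<pi> y \<ge> 0"
  unfolding out_pmf_def is_mac_def by (auto intro!: sum_nonneg)

lemma sum_rotate3:
  "(\<Sum>a\<in>A. \<Sum>b\<in>B. \<Sum>c\<in>C. g a b c) = (\<Sum>c\<in>C. \<Sum>a\<in>A. \<Sum>b\<in>B. g a b c)"
  by (rule trans[OF sum.cong[OF refl sum.swap] sum.swap])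

lemma sum_out_pmf:
  assumes "is_mac W"
  shows "(\<Sum>y\<in>UNIV. out_pmf W \<pi> y) = mass \<pi>"
  using assms sum_rotate3[of "\<lambda>a b y. \<pi> a b * W a b y" UNIV UNIV UNIV]
  by (simp add: out_pmf_def mass_def is_mac_def sum_distrib_left[symmetric])

lemma sum_UNIV_pair: "(\<Sum>r\<in>UNIV. f r) = (\<Sum>a\<in>UNIV. \<Sum>b\<in>UNIV. f (a, b))"
  by (simp add: UNIV_Times_UNIV[symmetric] sum.cartesian_product del: UNIV_Times_UNIV)

lemma sum_UNIV_triple: "(\<Sum>r\<in>UNIV. f r) = (\<Sum>a\<in>UNIV. \<Sum>b\<in>UNIV. \<Sum>c\<in>UNIV. f (a, b, c))"
  by (simp add: sum_UNIV_pair[of f] sum_UNIV_pair[of "\<lambda>bc. f (_, bc)"])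

lemma marg_slice_pmf_unit:
  "is_mac W \<Longrightarrow> marg UNIV (slice_pmf W \<pi>) (\<lambda>_. ()) () = mass \<pi>"
  by (simp add: is_mac_def marg_def sum_UNIV_triple slice_pmf_def mass_def sum_distrib_left[symmetric])

lemma marg_slice_pmf_input:
  assumes "is_mac W"
  shows "marg UNIV (slice_pmf W \<pi>) (\<lambda>r. ((\<lambda>(x1,x2,y). (x1,x2)) r, ())) ((a,b),()) = \<pi> a b"
proof -
  have "marg UNIV (slice_pmf W \<pi>) (\<lambda>r. ((\<lambda>(x1,x2,y). (x1,x2)) r, ())) ((a,b),())
      = sum (slice_pmf W \<pi>) ((\<lambda>c. (a,b,c)) ` UNIV)"
    unfolding marg_def by (rule arg_cong[where f = "sum _"]) auto
  also have "\<dots> = \<pi> a b"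
    using assms by (simp add: is_mac_def sum.reindex inj_on_def slice_pmf_def sum_distrib_left[symmetric])
  finally show ?thesis .
qed

lemma marg_slice_pmf_output:
  "marg UNIV (slice_pmf W \<pi>) (\<lambda>r. ((\<lambda>(x1,x2,y). y) r, ())) (c,()) = out_pmf W \<pi> c"
proof -
  have "marg UNIV (slice_pmf W \<pi>) (\<lambda>r. ((\<lambda>(x1,x2,y). y) r, ())) (c,())
      = sum (slice_pmf W \<pi>) ((\<lambda>(a,b). (a,b,c)) ` UNIV)"
    unfolding marg_def by (rule arg_cong[where f = "sum _"]) auto
  also have "\<dots> = out_pmf W \<pi> c"
    by (simp add: sum.reindex inj_on_def slice_pmf_def out_pmf_def sum_UNIV_pair)
  finally show ?thesis .
qed

lemma out_pmf_ge:
  assumes "is_mac W" "\<And>a b. \<pi> a b \<ge> 0"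
  shows "\<pi> a b * W a b c \<le> out_pmf W \<pi> c"
proof -
  have W: "\<And>a b c. W a b c \<ge> 0" using assms(1) by (simp add: is_mac_def)
  have "\<pi> a b * W a b c \<le> (\<Sum>b'\<in>UNIV. \<pi> a b' * W a b' c)"
    by (rule member_le_sum) (auto intro!: mult_nonneg_nonneg assms(2) W)
  also have "\<dots> \<le> out_pmf W \<pi> c"
    unfolding out_pmf_def
    by (rule member_le_sum[where f = "\<lambda>a'. \<Sum>b'\<in>UNIV. \<pi> a' b' * W a' b' c"])
       (auto intro!: sum_nonneg mult_nonneg_nonneg assms(2) W)
  finally show ?thesis .
qed

lemma slice_I12Y_eq_mac_info:
  fixes W :: "'x1::finite \<Rightarrow> 'x2::finite \<Rightarrow> 'y::finite \<Rightarrow> real"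
  assumes mac: "is_mac W" and \<pi>: "\<And>a b. \<pi> a b \<ge> 0" "mass \<pi> = 1"
  shows "slice_I12Y W \<pi> = mac_info W \<pi>"
proof -
  let ?Q = "slice_pmf W \<pi>" and ?q = "out_pmf W \<pi>"
  let ?g = "\<lambda>r::'x1 \<times> 'x2 \<times> 'y. ((\<lambda>(x1,x2,y). (x1,x2)) r, (\<lambda>(x1,x2,y). y) r, ())"
  have inj: "inj ?g" by (auto simp: inj_on_def)
  have m_joint: "marg UNIV ?Q ?g (?g r) = ?Q r" for r
  proof -
    have "{w. ?g w = ?g r} = {r}" by (cases r) auto
    then show ?thesis by (simp add: marg_def)
  qed
  have summand: "\<pi> a b * W a b c * log 2 (\<pi> a b * W a b c * 1 / (\<pi> a b * ?q c))
      = \<pi> a b * (W a b c * log 2 (W a b c)) - \<pi> a b * W a b c * log 2 (?q c)" for a b c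
  proof (cases "\<pi> a b * W a b c = 0")
    case False
    then have "\<pi> a b > 0" "W a b c > 0"
      using \<pi>(1)[of a b] mac by (auto simp: less_le is_mac_def)
    moreover from this have "?q c > 0"
      using out_pmf_ge[of W \<pi> a b c, OF mac \<pi>(1)] by (smt (verit) mult_pos_pos)
    ultimately show ?thesis by (simp add: log_divide algebra_simps)
  qed auto
  have "slice_I12Y W \<pi> = (\<Sum>r\<in>UNIV. case r of (a, b, c) \<Rightarrow>
        \<pi> a b * W a b c * log 2 (\<pi> a b * W a b c * 1 / (\<pi> a b * ?q c)))"
    unfolding slice_cmi_def cmi_def sum.reindex[OF inj, unfolded comp_def]
  proof (intro sum.cong refl)
    fix r :: "'x1 \<times> 'x2 \<times> 'y"
    obtain a b c where r: "r = (a, b, c)" by (cases r)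
    show "(case ?g r of (ab, c, u) \<Rightarrow> marg UNIV ?Q ?g (ab, c, u) *
          log 2 (marg UNIV ?Q ?g (ab, c, u) * marg UNIV ?Q (\<lambda>_. ()) u /
            (marg UNIV ?Q (\<lambda>r. ((\<lambda>(x1,x2,y). (x1,x2)) r, ())) (ab, u) *
             marg UNIV ?Q (\<lambda>r. ((\<lambda>(x1,x2,y). y) r, ())) (c, u)))) =
        (case r of (a, b, c) \<Rightarrow> \<pi> a b * W a b c * log 2 (\<pi> a b * W a b c * 1 / (\<pi> a b * ?q c)))"
      using m_joint[of r] marg_slice_pmf_unit[OF mac] marg_slice_pmf_input[of W \<pi> a b, OF mac]
        marg_slice_pmf_output[of W \<pi> c] \<pi>(2)
      by (simp add: r slice_pmf_def)
  qed
  also have "\<dots> = (\<Sum>r\<in>UNIV. case r of (a, b, c) \<Rightarrow>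
        \<pi> a b * (W a b c * log 2 (W a b c)) - \<pi> a b * W a b c * log 2 (?q c))"
    by (intro sum.cong refl) (simp only: summand split: prod.split)
  also have "\<dots> = mac_info W \<pi>"
    unfolding sum_UNIV_triple split mac_info_def neg_noise_entropy_def sum_subtractf
      sum_rotate3[of "\<lambda>a b c. \<pi> a b * W a b c * log 2 (?q c)"]
    by (simp add: sum_distrib_left sum_distrib_right out_pmf_def)
  finally show ?thesis .
qed

lemma xlog2_ge_tangent:
  fixes t a :: real
  assumes "t \<ge> 0" "a > 0"
  shows "(t - a) / ln 2 \<le> t * log 2 t - t * log 2 a"
proof (cases "t = 0")
  case False
  then have t: "t > 0" using assms by simp
  have "ln (a / t) \<le> a / t - 1" by (rule ln_le_minus_one) (use t assms in simp)
  then have "t * (ln a - ln t) \<le> t * (a / t - 1)" using t assms by (simp add: ln_div)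
  then have "t - a \<le> t * ln t - t * ln a" using t by (simp add: algebra_simps)
  then have "(t - a) / ln 2 \<le> (t * ln t - t * ln a) / ln 2" by (simp add: divide_right_mono)
  then show ?thesis by (simp add: log_def diff_divide_distrib)
qed (use assms in simp)

lemma xlog2_convex:
  fixes t s l :: real
  assumes "t \<ge> 0" "s \<ge> 0" "0 \<le> l" "l \<le> 1"
  shows "(l * t + (1 - l) * s) * log 2 (l * t + (1 - l) * s) \<le> l * (t * log 2 t) + (1 - l) * (s * log 2 s)"
proof -
  let ?a = "l * t + (1 - l) * s"
  show ?thesis
  proof (cases "?a = 0")
    case True
    then have "l * t = 0" "(1 - l) * s = 0" using assms by (smt (verit) mult_nonneg_nonneg)+
    then show ?thesis using True by auto
  next
    case False
    have "?a \<ge> 0" using assms by simp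
    with False have a: "?a > 0" by simp
    have "l * ((t - ?a) / ln 2) + (1 - l) * ((s - ?a) / ln 2) = 0"
      by (simp add: add_divide_distrib[symmetric] algebra_simps)
    moreover have "l * ((t - ?a) / ln 2) \<le> l * (t * log 2 t - t * log 2 ?a)"
      by (rule mult_left_mono[OF xlog2_ge_tangent[OF assms(1) a]]) (use assms in simp)
    moreover have "(1 - l) * ((s - ?a) / ln 2) \<le> (1 - l) * (s * log 2 s - s * log 2 ?a)"
      by (rule mult_left_mono[OF xlog2_ge_tangent[OF assms(2) a]]) (use assms in simp)
    ultimately show ?thesis by (simp add: algebra_simps)
  qed
qed

lemma neg_xlog2_le:
  fixes t :: real
  assumes "t \<ge> 0"
  shows "- (t * log 2 t) \<le> 1 / ln 2"
proof -
  have "(t - 1) / ln 2 \<le> t * log 2 t" using xlog2_ge_tangent[OF assms, of 1] by simp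
  moreover have "(1 - t) / ln 2 \<le> 1 / ln 2" using assms by (simp add: divide_right_mono)
  moreover have "- ((t - 1) / ln 2) = (1 - t) / ln 2" by (simp add: field_simps)
  ultimately show ?thesis by linarith
qed

lemma mac_info_concave:
  assumes mac: "is_mac W" and \<pi>: "\<And>a b. \<pi> a b \<ge> 0" "\<And>a b. \<pi>' a b \<ge> 0" and l: "0 \<le> l" "l \<le> 1"
  shows "l * mac_info W \<pi> + (1 - l) * mac_info W \<pi>' \<le> mac_info W (\<lambda>a b. l * \<pi> a b + (1 - l) * \<pi>' a b)"
proof -
  let ?\<pi> = "\<lambda>a b. l * \<pi> a b + (1 - l) * \<pi>' a b"
  have out: "out_pmf W ?\<pi> y = l * out_pmf W \<pi> y + (1 - l) * out_pmf W \<pi>' y" for y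
    unfolding out_pmf_def sum_distrib_left sum.distrib[symmetric]
    by (intro sum.cong refl) (simp add: algebra_simps)
  have noise: "neg_noise_entropy W ?\<pi> = l * neg_noise_entropy W \<pi> + (1 - l) * neg_noise_entropy W \<pi>'"
    unfolding neg_noise_entropy_def sum_distrib_left sum.distrib[symmetric]
    by (intro sum.cong refl) (simp add: algebra_simps)
  have "(\<Sum>y\<in>UNIV. out_pmf W ?\<pi> y * log 2 (out_pmf W ?\<pi> y))
     \<le> l * (\<Sum>y\<in>UNIV. out_pmf W \<pi> y * log 2 (out_pmf W \<pi> y))
       + (1 - l) * (\<Sum>y\<in>UNIV. out_pmf W \<pi>' y * log 2 (out_pmf W \<pi>' y))"
    unfolding out sum_distrib_left sum.distrib[symmetric]
    by (intro sum_mono xlog2_convex out_pmf_nonneg[OF mac] \<pi> l)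
  then show ?thesis unfolding mac_info_def noise by (simp add: algebra_simps)
qed

lemma mac_info_le:
  fixes W :: "'x1::finite \<Rightarrow> 'x2::finite \<Rightarrow> 'y::finite \<Rightarrow> real"
  assumes mac: "is_mac W" and \<pi>: "\<And>a b. \<pi> a b \<ge> 0"
  shows "mac_info W \<pi> \<le> CARD('y) / ln 2"
proof -
  have W: "\<And>a b c. W a b c \<ge> 0" "\<And>a b. (\<Sum>c\<in>UNIV. W a b c) = 1"
    using mac by (auto simp: is_mac_def)
  have "W a b c \<le> 1" for a b c
    using member_le_sum[of c UNIV "W a b"] W by simp
  then have Wlog: "W a b c * log 2 (W a b c) \<le> 0" for a b c
    using W(1)[of a b c] by (cases "W a b c = 0") (auto intro: mult_nonneg_nonpos)
  have "(\<Sum>y\<in>UNIV. W a b y * log 2 (W a b y)) \<le> 0" for a b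
    by (intro sum_nonpos Wlog)
  then have "neg_noise_entropy W \<pi> \<le> 0"
    unfolding neg_noise_entropy_def by (intro sum_nonpos) (rule mult_nonneg_nonpos[OF \<pi>])
  moreover have "(\<Sum>y\<in>UNIV. - (out_pmf W \<pi> y * log 2 (out_pmf W \<pi> y))) \<le> (\<Sum>y\<in>(UNIV::'y set). 1 / ln 2)"
    by (intro sum_mono neg_xlog2_le out_pmf_nonneg[OF mac] \<pi>)
  ultimately show ?thesis unfolding mac_info_def by (simp add: sum_negf)
qed

section \<open>Reducing the support of a conic combination\<close>

lemma family_dependent_if_card_gt_DIM:
  fixes a :: "'i \<Rightarrow> 'v::euclidean_space"
  assumes S: "finite S" "DIM('v) < card S"
  obtains v where "\<exists>u\<in>S. v u \<noteq> 0" "(\<Sum>u\<in>S. v u *\<^sub>R a u) = 0"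
proof (cases "inj_on a S")
  case False
  then obtain x y where xy: "x \<in> S" "y \<in> S" "x \<noteq> y" "a x = a y"
    unfolding inj_on_def by blast
  let ?v = "\<lambda>u. if u = x then 1 else if u = y then -1 else 0 :: real"
  have "?v u *\<^sub>R a u = (if u = x then a u else 0) - (if u = y then a u else 0)" for u
    using xy(3) by simp
  then have "(\<Sum>u\<in>S. ?v u *\<^sub>R a u) = a x - a y"
    using xy(1,2) S(1) by (simp add: sum_subtractf)
  then show ?thesis
    using xy by (intro that[of ?v] bexI[of _ x]) auto
next
  case True
  then have "dependent (a ` S)" using S by (intro dependent_biggerset) (simp add: card_image)
  then obtain T c where T: "finite T" "T \<subseteq> a ` S" "(\<Sum>x\<in>T. c x *\<^sub>R x) = 0" "\<exists>x\<in>T. c x \<noteq> 0"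
    unfolding dependent_explicit by blast
  let ?v = "\<lambda>u. if a u \<in> T then c (a u) else 0"
  have "(\<Sum>u\<in>S. ?v u *\<^sub>R a u) = (\<Sum>u\<in>{u\<in>S. a u \<in> T}. c (a u) *\<^sub>R a u)"
    by (rule sum.mono_neutral_cong_right) (use S in auto)
  also have "\<dots> = (\<Sum>x\<in>T. c x *\<^sub>R x)"
  proof -
    have "a ` {u\<in>S. a u \<in> T} = T" "inj_on a {u\<in>S. a u \<in> T}"
      using T(2) True by (auto simp: inj_on_def)
    then show ?thesis using sum.reindex[of a "{u\<in>S. a u \<in> T}" "\<lambda>x. c x *\<^sub>R x"] by simp
  qed
  finally have "(\<Sum>u\<in>S. ?v u *\<^sub>R a u) = 0" using T(3) by simp
  moreover obtain u where "u \<in> S" "a u \<in> T" "c (a u) \<noteq> 0" using T(2,4) by blast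
  ultimately show ?thesis by (intro that[of ?v] bexI[of _ u]) auto
qed

text \<open>A nonzero dependence among points of the open half-space \<open>x \<bullet> c > 0\<close> has coefficients
  of both signs.\<close>

lemma signed_dependence_in_halfspace:
  fixes a :: "'i \<Rightarrow> 'v::euclidean_space"
  assumes I: "finite I" and pos: "\<And>u. u \<in> I \<Longrightarrow> a u \<bullet> c > 0"
    and S: "S \<subseteq> I" "DIM('v) < card S"
  shows "\<exists>w. (\<forall>u. u \<notin> S \<longrightarrow> w u = 0) \<and> (\<Sum>u\<in>I. w u *\<^sub>R a u) = 0
    \<and> 0 \<le> (\<Sum>u\<in>I. w u * g u) \<and> (\<exists>u\<in>S. w u < 0)"
proof -
  have fS: "finite S" using I S(1) finite_subset by blast
  obtain v where v: "\<exists>u\<in>S. v u \<noteq> 0" "(\<Sum>u\<in>S. v u *\<^sub>R a u) = 0"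
    using family_dependent_if_card_gt_DIM[OF fS S(2)] by blast
  define \<sigma> :: real where "\<sigma> = (if 0 \<le> (\<Sum>u\<in>S. v u * g u) then 1 else -1)"
  define w where "w u = (if u \<in> S then \<sigma> * v u else 0)" for u
  have restrict: "(\<Sum>u\<in>I. w u * f u) = \<sigma> * (\<Sum>u\<in>S. v u * f u)" for f :: "'i \<Rightarrow> real"
    using sum.mono_neutral_cong_right[OF I S(1), of "\<lambda>u. w u * f u" "\<lambda>u. \<sigma> * (v u * f u)"]
    by (simp add: w_def sum_distrib_left)
  have "(\<Sum>u\<in>S. (\<sigma> * v u) *\<^sub>R a u) = \<sigma> *\<^sub>R (\<Sum>u\<in>S. v u *\<^sub>R a u)"
    by (simp add: scaleR_sum_right)
  then have wa: "(\<Sum>u\<in>I. w u *\<^sub>R a u) = 0"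
    using sum.mono_neutral_cong_right[OF I S(1), of "\<lambda>u. w u *\<^sub>R a u" "\<lambda>u. (\<sigma> * v u) *\<^sub>R a u"] v(2)
    by (simp add: w_def)
  have wg: "0 \<le> (\<Sum>u\<in>I. w u * g u)"
    unfolding restrict \<sigma>_def by simp
  have "\<exists>u\<in>S. w u < 0"
  proof (rule ccontr)
    assume "\<not> ?thesis"
    then have nonneg: "0 \<le> w u * (a u \<bullet> c)" if "u \<in> I" for u
      using pos[OF that] by (cases "u \<in> S") (auto simp: w_def not_less)
    have "(\<Sum>u\<in>I. w u * (a u \<bullet> c)) = (\<Sum>u\<in>I. w u *\<^sub>R a u) \<bullet> c"
      by (simp add: inner_sum_left)
    then have "\<forall>u\<in>I. w u * (a u \<bullet> c) = 0"
      using sum_nonneg_eq_0_iff[OF I, of "\<lambda>u. w u * (a u \<bullet> c)"] nonneg wa by simp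
    then have "\<forall>u\<in>S. w u = 0" using pos S(1) by fastforce
    then show False using v(1) by (auto simp: w_def \<sigma>_def split: if_splits)
  qed
  then show ?thesis using wa wg by (intro exI[of _ w]) (auto simp: w_def)
qed

lemma ratio_test:
  fixes \<alpha> w :: "'i \<Rightarrow> real"
  assumes I: "finite I" and \<alpha>: "\<And>u. u \<in> I \<Longrightarrow> \<alpha> u \<ge> 0"
    and neg: "\<And>u. u \<in> I \<Longrightarrow> w u < 0 \<Longrightarrow> \<alpha> u \<noteq> 0" and ex: "\<exists>u\<in>I. w u < 0"
  shows "\<exists>t>0. \<exists>u0\<in>I. \<alpha> u0 \<noteq> 0 \<and> \<alpha> u0 + t * w u0 = 0 \<and> (\<forall>u\<in>I. 0 \<le> \<alpha> u + t * w u)"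
proof -
  let ?N = "{u\<in>I. w u < 0}" and ?ratio = "\<lambda>u. \<alpha> u / (- w u)"
  have N: "finite (?ratio ` ?N)" "?ratio ` ?N \<noteq> {}" using I ex by auto
  define t where "t = Min (?ratio ` ?N)"
  obtain u0 where u0: "u0 \<in> ?N" "t = ?ratio u0"
    using Min_in[OF N] unfolding t_def by blast
  have t_le: "t * (- w u) \<le> \<alpha> u" if "u \<in> ?N" for u
  proof -
    have "t \<le> ?ratio u" unfolding t_def using N(1) that by (intro Min_le) auto
    moreover have "0 < - w u" using that by simp
    ultimately show ?thesis by (simp only: pos_le_divide_eq)
  qed
  have u0_pos: "\<alpha> u0 > 0" "- w u0 > 0"
    using u0(1) \<alpha>[of u0] neg[of u0] by auto
  then have "t > 0"
    unfolding u0(2) by (rule divide_pos_pos)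
  moreover have "\<alpha> u0 + t * w u0 = 0"
    using u0(2) u0_pos by (simp add: field_simps)
  moreover have "0 \<le> \<alpha> u + t * w u" if "u \<in> I" for u
    using t_le[of u] \<alpha>[OF that] \<open>t > 0\<close> that by (cases "w u < 0") auto
  ultimately show ?thesis
    using u0(1) u0_pos(1) by (intro exI[of _ t]) (auto intro!: bexI[of _ u0])
qed

lemma conic_support_reduction_step:
  fixes a :: "'i \<Rightarrow> 'v::euclidean_space"
  assumes I: "finite I" and pos: "\<And>u. u \<in> I \<Longrightarrow> a u \<bullet> c > 0" and \<alpha>: "\<And>u. u \<in> I \<Longrightarrow> \<alpha> u \<ge> 0"
    and big: "DIM('v) < card {u\<in>I. \<alpha> u \<noteq> 0}"
  obtains \<beta> where "\<And>u. u \<in> I \<Longrightarrow> \<beta> u \<ge> 0" "(\<Sum>u\<in>I. \<beta> u *\<^sub>R a u) = (\<Sum>u\<in>I. \<alpha> u *\<^sub>R a u)"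
    "(\<Sum>u\<in>I. \<alpha> u * g u) \<le> (\<Sum>u\<in>I. \<beta> u * g u)" "card {u\<in>I. \<beta> u \<noteq> 0} < card {u\<in>I. \<alpha> u \<noteq> 0}"
proof -
  let ?S = "{u\<in>I. \<alpha> u \<noteq> 0}"
  have "?S \<subseteq> I" by blast
  obtain w where w: "\<forall>u. u \<notin> ?S \<longrightarrow> w u = 0" "(\<Sum>u\<in>I. w u *\<^sub>R a u) = 0"
      "0 \<le> (\<Sum>u\<in>I. w u * g u)" "\<exists>u\<in>?S. w u < 0"
    using signed_dependence_in_halfspace[of I a c ?S g, OF I pos \<open>?S \<subseteq> I\<close> big] by blast
  have "\<exists>t>0. \<exists>u0\<in>I. \<alpha> u0 \<noteq> 0 \<and> \<alpha> u0 + t * w u0 = 0 \<and> (\<forall>u\<in>I. 0 \<le> \<alpha> u + t * w u)"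
    using w(1,4) by (intro ratio_test[OF I \<alpha>]) auto
  then obtain t u0 where t: "t > 0" "u0 \<in> ?S" "\<alpha> u0 + t * w u0 = 0" "\<forall>u\<in>I. 0 \<le> \<alpha> u + t * w u"
    by blast
  define \<beta> where "\<beta> u = \<alpha> u + t * w u" for u
  show ?thesis
  proof (rule that[of \<beta>])
    show "0 \<le> \<beta> u" if "u \<in> I" for u
      using t(4) that by (simp add: \<beta>_def)
    have "(\<Sum>u\<in>I. \<beta> u *\<^sub>R a u) = (\<Sum>u\<in>I. \<alpha> u *\<^sub>R a u) + t *\<^sub>R (\<Sum>u\<in>I. w u *\<^sub>R a u)"
      by (simp add: \<beta>_def scaleR_add_left sum.distrib scaleR_sum_right)
    then show "(\<Sum>u\<in>I. \<beta> u *\<^sub>R a u) = (\<Sum>u\<in>I. \<alpha> u *\<^sub>R a u)"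
      using w(2) by simp
    have "(\<Sum>u\<in>I. \<beta> u * g u) = (\<Sum>u\<in>I. \<alpha> u * g u) + t * (\<Sum>u\<in>I. w u * g u)"
      by (simp add: \<beta>_def distrib_right sum.distrib sum_distrib_left mult.assoc)
    then show "(\<Sum>u\<in>I. \<alpha> u * g u) \<le> (\<Sum>u\<in>I. \<beta> u * g u)"
      using w(3) t(1) by simp
    have "{u\<in>I. \<beta> u \<noteq> 0} \<subseteq> ?S - {u0}"
      using w(1) t(2,3) by (auto simp: \<beta>_def)
    then have "card {u\<in>I. \<beta> u \<noteq> 0} \<le> card (?S - {u0})"
      using I by (intro card_mono) auto
    also have "\<dots> < card ?S"
      using I t(2) by (intro card_Diff1_less) auto
    finally show "card {u\<in>I. \<beta> u \<noteq> 0} < card ?S" .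
  qed
qed

lemma conic_support_reduction:
  fixes a :: "'i \<Rightarrow> 'v::euclidean_space"
  assumes I: "finite I" and pos: "\<And>u. u \<in> I \<Longrightarrow> a u \<bullet> c > 0" and \<alpha>: "\<And>u. u \<in> I \<Longrightarrow> \<alpha> u \<ge> 0"
  shows "\<exists>\<beta>. (\<forall>u\<in>I. \<beta> u \<ge> 0) \<and> (\<Sum>u\<in>I. \<beta> u *\<^sub>R a u) = (\<Sum>u\<in>I. \<alpha> u *\<^sub>R a u)
    \<and> (\<Sum>u\<in>I. \<alpha> u * g u) \<le> (\<Sum>u\<in>I. \<beta> u * g u) \<and> card {u\<in>I. \<beta> u \<noteq> 0} \<le> DIM('v)"
  using \<alpha>
proof (induction "card {u\<in>I. \<alpha> u \<noteq> 0}" arbitrary: \<alpha> rule: less_induct)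
  case less
  show ?case
  proof (cases "card {u\<in>I. \<alpha> u \<noteq> 0} \<le> DIM('v)")
    case True
    then show ?thesis using less.prems by (intro exI[of _ \<alpha>]) auto
  next
    case False
    then have big: "DIM('v) < card {u\<in>I. \<alpha> u \<noteq> 0}" by simp
    obtain \<beta> where \<beta>: "\<And>u. u \<in> I \<Longrightarrow> \<beta> u \<ge> 0" "(\<Sum>u\<in>I. \<beta> u *\<^sub>R a u) = (\<Sum>u\<in>I. \<alpha> u *\<^sub>R a u)"
        "(\<Sum>u\<in>I. \<alpha> u * g u) \<le> (\<Sum>u\<in>I. \<beta> u * g u)" "card {u\<in>I. \<beta> u \<noteq> 0} < card {u\<in>I. \<alpha> u \<noteq> 0}"
      using conic_support_reduction_step[of I a c \<alpha> g, OF I pos less.prems big] by blast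
    obtain \<gamma> where "\<forall>u\<in>I. \<gamma> u \<ge> 0" "(\<Sum>u\<in>I. \<gamma> u *\<^sub>R a u) = (\<Sum>u\<in>I. \<beta> u *\<^sub>R a u)"
        "(\<Sum>u\<in>I. \<beta> u * g u) \<le> (\<Sum>u\<in>I. \<gamma> u * g u)" "card {u\<in>I. \<gamma> u \<noteq> 0} \<le> DIM('v)"
      using less.hyps[OF \<beta>(4) \<beta>(1)] by blast
    then show ?thesis using \<beta>(2,3) by (intro exI[of _ \<gamma>]) auto
  qed
qed

section \<open>Time sharing and cardinality reduction\<close>

lemma is_pmf_ux_nonneg: "is_pmf_ux k p \<Longrightarrow> p u a b \<ge> 0"
  by (simp add: is_pmf_ux_def)

lemma is_pmf_ux_pos: "is_pmf_ux k p \<Longrightarrow> k \<ge> 1"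
  by (cases k) (auto simp: is_pmf_ux_def)

lemma is_pmf_ux_marginal_nonneg: "is_pmf_ux k p \<Longrightarrow> (\<Sum>u<k. p u a b) \<ge> 0"
  by (simp add: is_pmf_ux_def sum_nonneg)

lemma is_pmf_ux_mass_marginal: "is_pmf_ux k p \<Longrightarrow> mass (\<lambda>a b. \<Sum>u<k. p u a b) = 1"
  using mass_sum[where \<beta> = "\<lambda>_. 1" and I = "{..<k}" and q = p] by (simp add: is_pmf_ux_def mass_def)

lemma f_obj_le_card_div_ln2:
  fixes W :: "'x1::finite \<Rightarrow> 'x2::finite \<Rightarrow> 'y::finite \<Rightarrow> real"
  assumes "is_mac W" "is_pmf_ux k p"
  shows "f_obj W k p C1 C2 \<le> CARD('y) / ln 2"
proof -
  have "f_obj W k p C1 C2 \<le> slice_I12Y W (\<lambda>a b. \<Sum>u<k. p u a b)"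
    unfolding f_obj_eq_rate_min[OF is_pmf_ux_pos[OF assms(2)]] by (rule rate_min_le)
  also have "\<dots> = mac_info W (\<lambda>a b. \<Sum>u<k. p u a b)"
    using assms by (intro slice_I12Y_eq_mac_info is_pmf_ux_marginal_nonneg is_pmf_ux_mass_marginal)
  also have "\<dots> \<le> CARD('y) / ln 2"
    using assms by (intro mac_info_le is_pmf_ux_marginal_nonneg)
  finally show ?thesis .
qed

lemma sum_lessThan_add: "(\<Sum>u<k + (k' :: nat). f u) = (\<Sum>u<k. f u) + (\<Sum>i<k'. f (k + i))"
  by (induction k') (simp_all add: add.assoc)

definition time_share :: "real \<Rightarrow> nat \<Rightarrow> (nat \<Rightarrow> ('x1, 'x2) slice) \<Rightarrow> (nat \<Rightarrow> ('x1, 'x2) slice)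
    \<Rightarrow> nat \<Rightarrow> ('x1, 'x2) slice" where
  "time_share l k p p' u = (if u < k then (\<lambda>a b. l * p u a b) else (\<lambda>a b. (1 - l) * p' (u - k) a b))"

lemma sum_time_share:
  assumes "pos_homogeneous G" "0 \<le> l" "l \<le> 1"
  shows "(\<Sum>u<k + k'. G (time_share l k p p' u)) = l * (\<Sum>u<k. G (p u)) + (1 - l) * (\<Sum>u<k'. G (p' u))"
  using assms unfolding pos_homogeneous_def
  by (simp add: sum_lessThan_add time_share_def sum_distrib_left)

lemma time_share_marginal:
  "(\<Sum>u<k + k'. time_share l k p p' u a b) = l * (\<Sum>u<k. p u a b) + (1 - l) * (\<Sum>u<k'. p' u a b)"
  by (simp add: sum_lessThan_add time_share_def sum_distrib_left)

lemma is_pmf_ux_time_share: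
  assumes p: "is_pmf_ux k p" and p': "is_pmf_ux k' p'" and l: "0 \<le> l" "l \<le> 1"
  shows "is_pmf_ux (k + k') (time_share l k p p')"
  unfolding is_pmf_ux_def
proof (intro conjI allI impI)
  show "0 \<le> time_share l k p p' u a b" for u a b
    using p p' l by (simp add: time_share_def is_pmf_ux_def)
  show "time_share l k p p' u a b = 0" if "k + k' \<le> u" for u a b
    using p' that by (simp add: time_share_def is_pmf_ux_def)
  have "(\<Sum>u<k + k'. \<Sum>a\<in>UNIV. \<Sum>b\<in>UNIV. time_share l k p p' u a b)
      = mass (\<lambda>a b. \<Sum>u<k + k'. 1 * time_share l k p p' u a b)"
    unfolding mass_sum by (simp add: mass_def)
  also have "\<dots> = l * mass (\<lambda>a b. \<Sum>u<k. p u a b) + (1 - l) * mass (\<lambda>a b. \<Sum>u<k'. p' u a b)"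
    by (simp add: time_share_marginal mass_def sum.distrib sum_distrib_left)
  finally show "(\<Sum>u<k + k'. \<Sum>a\<in>UNIV. \<Sum>b\<in>UNIV. time_share l k p p' u a b) = 1"
    using is_pmf_ux_mass_marginal[OF p] is_pmf_ux_mass_marginal[OF p'] by simp
qed

lemma f_obj_time_share:
  fixes W :: "'x1::finite \<Rightarrow> 'x2::finite \<Rightarrow> 'y::finite \<Rightarrow> real"
  assumes mac: "is_mac W" and p: "is_pmf_ux k p" and p': "is_pmf_ux k' p'" and l: "0 \<le> l" "l \<le> 1"
  shows "l * f_obj W k p C1 C2 + (1 - l) * f_obj W k' p' C1' C2'
    \<le> f_obj W (k + k') (time_share l k p p') (l * C1 + (1 - l) * C1') (l * C2 + (1 - l) * C2')"
proof -
  let ?\<pi> = "\<lambda>a b. \<Sum>u<k. p u a b" and ?\<pi>' = "\<lambda>a b. \<Sum>u<k'. p' u a b"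
  have "k \<ge> 1" "k' \<ge> 1" "k + k' \<ge> 1"
    using is_pmf_ux_pos[OF p] is_pmf_ux_pos[OF p'] by simp_all
  have "l * slice_I12Y W ?\<pi> + (1 - l) * slice_I12Y W ?\<pi>'
      = l * mac_info W ?\<pi> + (1 - l) * mac_info W ?\<pi>'"
    using mac p p' by (simp add: slice_I12Y_eq_mac_info is_pmf_ux_marginal_nonneg is_pmf_ux_mass_marginal)
  also have "\<dots> \<le> mac_info W (\<lambda>a b. \<Sum>u<k + k'. time_share l k p p' u a b)"
    unfolding time_share_marginal
    using mac p p' l by (intro mac_info_concave is_pmf_ux_marginal_nonneg)
  also have "\<dots> = slice_I12Y W (\<lambda>a b. \<Sum>u<k + k'. time_share l k p p' u a b)"
    using mac is_pmf_ux_time_share[OF p p' l]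
    by (simp add: slice_I12Y_eq_mac_info is_pmf_ux_marginal_nonneg is_pmf_ux_mass_marginal)
  finally have info: "l * slice_I12Y W ?\<pi> + (1 - l) * slice_I12Y W ?\<pi>'
      \<le> slice_I12Y W (\<lambda>a b. \<Sum>u<k + k'. time_share l k p p' u a b)" .
  show ?thesis
    unfolding f_obj_eq_rate_min[OF \<open>k \<ge> 1\<close>] f_obj_eq_rate_min[OF \<open>k' \<ge> 1\<close>]
      f_obj_eq_rate_min[OF \<open>k + k' \<ge> 1\<close>] sum_time_share[OF pos_homogeneous_slice_cmi l]
    by (intro rate_min_concave[OF l info])
qed

text \<open>Preserving the sums of \<open>g2 + g1\<close>, \<open>g3 + g1\<close>, \<open>g4 + g1\<close> while not increasing that of \<open>g1\<close>
  moves every argument of \<open>rate_min\<close> upwards.\<close>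

lemma rate_term_reweighting:
  fixes f :: "'i \<Rightarrow> 'v::euclidean_space"
  assumes I: "finite I" and pos: "\<And>u. u \<in> I \<Longrightarrow> f u \<bullet> c > 0"
  shows "\<exists>\<beta>. (\<forall>u\<in>I. \<beta> u \<ge> 0) \<and> (\<Sum>u\<in>I. \<beta> u *\<^sub>R f u) = (\<Sum>u\<in>I. f u)
    \<and> card {u\<in>I. \<beta> u \<noteq> 0} \<le> DIM('v) + 3
    \<and> (\<Sum>u\<in>I. \<beta> u * g1 u) \<le> (\<Sum>u\<in>I. g1 u) \<and> (\<Sum>u\<in>I. g2 u) \<le> (\<Sum>u\<in>I. \<beta> u * g2 u)
    \<and> (\<Sum>u\<in>I. g3 u) \<le> (\<Sum>u\<in>I. \<beta> u * g3 u)
    \<and> (\<Sum>u\<in>I. g4 u) - (\<Sum>u\<in>I. g1 u) \<le> (\<Sum>u\<in>I. \<beta> u * g4 u) - (\<Sum>u\<in>I. \<beta> u * g1 u)"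
proof -
  define a where "a u = (f u, g2 u + g1 u, g3 u + g1 u, g4 u + g1 u)" for u
  have "a u \<bullet> (c, 0, 0, 0) > 0" if "u \<in> I" for u
    using pos[OF that] by (simp add: a_def)
  then obtain \<beta> where \<beta>: "\<forall>u\<in>I. \<beta> u \<ge> 0" "(\<Sum>u\<in>I. \<beta> u *\<^sub>R a u) = (\<Sum>u\<in>I. 1 *\<^sub>R a u)"
      "(\<Sum>u\<in>I. 1 * - g1 u) \<le> (\<Sum>u\<in>I. \<beta> u * - g1 u)" "card {u\<in>I. \<beta> u \<noteq> 0} \<le> DIM('v \<times> real \<times> real \<times> real)"
    using conic_support_reduction[of I a "(c, 0, 0, 0)" "\<lambda>_. 1" "\<lambda>u. - g1 u", OF I] by fastforce
  have "(\<Sum>u\<in>I. \<beta> u *\<^sub>R f u) = (\<Sum>u\<in>I. f u)"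
    and "(\<Sum>u\<in>I. \<beta> u * g2 u) + (\<Sum>u\<in>I. \<beta> u * g1 u) = (\<Sum>u\<in>I. g2 u) + (\<Sum>u\<in>I. g1 u)"
    and "(\<Sum>u\<in>I. \<beta> u * g3 u) + (\<Sum>u\<in>I. \<beta> u * g1 u) = (\<Sum>u\<in>I. g3 u) + (\<Sum>u\<in>I. g1 u)"
    and "(\<Sum>u\<in>I. \<beta> u * g4 u) + (\<Sum>u\<in>I. \<beta> u * g1 u) = (\<Sum>u\<in>I. g4 u) + (\<Sum>u\<in>I. g1 u)"
    using \<beta>(2) by (simp_all add: a_def fst_sum snd_sum prod_eq_iff distrib_left sum.distrib)
  moreover have "(\<Sum>u\<in>I. \<beta> u * g1 u) \<le> (\<Sum>u\<in>I. g1 u)"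
    using \<beta>(3) by (simp add: sum_negf)
  ultimately show ?thesis
    using \<beta>(1,4) by (intro exI[of _ \<beta>]) auto
qed

lemma pos_homogeneous_eval: "pos_homogeneous (\<lambda>s. s a b)"
  by (simp add: pos_homogeneous_def)

lemma pos_homogeneous_mass: "pos_homogeneous mass"
  by (simp add: pos_homogeneous_def mass_def sum_distrib_left)

lemma mass_eq_0_imp_zero:
  assumes "\<And>a b. s a b \<ge> 0" "mass s = 0"
  shows "s = (\<lambda>a b. 0)"
  using assms by (auto simp: mass_def sum_nonneg_eq_0_iff sum_nonneg fun_eq_iff)

lemma sum_slices_support:
  assumes q: "is_pmf_ux N q" and G: "pos_homogeneous G"
  shows "(\<Sum>u<N. G (q u)) = (\<Sum>u\<in>{u\<in>{..<N}. 0 < mass (q u)}. G (q u))"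
proof -
  have "G (q u) = 0" if "\<not> 0 < mass (q u)" for u
  proof -
    have "0 \<le> mass (q u)"
      unfolding mass_def using is_pmf_ux_nonneg[OF q] by (intro sum_nonneg)
    then have "q u = (\<lambda>a b. 0)"
      using that is_pmf_ux_nonneg[OF q] by (intro mass_eq_0_imp_zero) auto
    then show ?thesis using pos_homogeneous_zero[OF G] by simp
  qed
  then show ?thesis by (intro sum.mono_neutral_right) auto
qed

lemma pmf_of_weighted_slices:
  assumes I: "finite I" and \<beta>: "\<And>u. u \<in> I \<Longrightarrow> \<beta> u \<ge> 0" and q: "\<And>u a b. q u a b \<ge> 0"
    and total: "(\<Sum>u\<in>I. \<beta> u * mass (q u)) = 1"
  shows "\<exists>r. is_pmf_ux (card {u\<in>I. \<beta> u \<noteq> 0}) r \<and>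
    (\<forall>G. pos_homogeneous G \<longrightarrow> (\<Sum>i<card {u\<in>I. \<beta> u \<noteq> 0}. G (r i)) = (\<Sum>u\<in>I. \<beta> u * G (q u)))"
proof -
  let ?S = "{u\<in>I. \<beta> u \<noteq> 0}"
  define n where "n = card ?S"
  obtain e where e: "bij_betw e {..<n} ?S"
    using ex_bij_betw_nat_finite[of ?S] I unfolding n_def atLeast0LessThan by auto
  define r where "r i = (\<lambda>a b. if i < n then \<beta> (e i) * q (e i) a b else 0)" for i
  have e_in: "e i \<in> ?S" if "i < n" for i
    using e that by (auto simp: bij_betw_def)
  have hom: "(\<Sum>i<n. G (r i)) = (\<Sum>u\<in>I. \<beta> u * G (q u))" if G: "pos_homogeneous G" for G
  proof -
    have "(\<Sum>i<n. G (r i)) = (\<Sum>i<n. \<beta> (e i) * G (q (e i)))"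
      using G e_in \<beta> by (intro sum.cong) (auto simp: r_def pos_homogeneous_def)
    also have "\<dots> = (\<Sum>u\<in>?S. \<beta> u * G (q u))"
      using sum.reindex_bij_betw[OF e, of "\<lambda>u. \<beta> u * G (q u)"] by simp
    also have "\<dots> = (\<Sum>u\<in>I. \<beta> u * G (q u))"
      using I by (intro sum.mono_neutral_left) auto
    finally show ?thesis .
  qed
  have "is_pmf_ux n r"
    unfolding is_pmf_ux_def
  proof (intro conjI allI impI)
    show "0 \<le> r u a b" for u a b
      using \<beta> e_in q by (simp add: r_def)
    show "r u a b = 0" if "n \<le> u" for u a b
      using that by (simp add: r_def)
    show "(\<Sum>u<n. \<Sum>a\<in>UNIV. \<Sum>b\<in>UNIV. r u a b) = 1"
      using hom[OF pos_homogeneous_mass] total by (simp add: mass_def)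
  qed
  then show ?thesis using hom unfolding n_def by blast
qed

lemma slice_reweighting:
  fixes W :: "'x1::finite \<Rightarrow> 'x2::finite \<Rightarrow> 'y::finite \<Rightarrow> real"
    and F :: "('x1 \<Rightarrow> 'x2 \<Rightarrow> real) \<Rightarrow> 'v::euclidean_space"
  assumes q: "is_pmf_ux N q"
    and F_sum: "\<And>(I :: nat set) \<beta> s. F (\<lambda>a b. \<Sum>u\<in>I. \<beta> u * s u a b) = (\<Sum>u\<in>I. \<beta> u *\<^sub>R F (s u))"
    and F_mass: "\<And>s. F s \<bullet> c = mass s"
  shows "\<exists>k r. k \<le> DIM('v) + 3 \<and> is_pmf_ux k r \<and> F (\<lambda>a b. \<Sum>i<k. r i a b) = F (\<lambda>a b. \<Sum>u<N. q u a b)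
    \<and> (\<Sum>i<k. slice_I12 W (r i)) \<le> (\<Sum>u<N. slice_I12 W (q u))
    \<and> (\<Sum>u<N. slice_I1Y W (q u)) \<le> (\<Sum>i<k. slice_I1Y W (r i))
    \<and> (\<Sum>u<N. slice_I2Y W (q u)) \<le> (\<Sum>i<k. slice_I2Y W (r i))
    \<and> (\<Sum>u<N. slice_I12Y W (q u)) - (\<Sum>u<N. slice_I12 W (q u))
      \<le> (\<Sum>i<k. slice_I12Y W (r i)) - (\<Sum>i<k. slice_I12 W (r i))"
proof -
  let ?I = "{u\<in>{..<N}. 0 < mass (q u)}"
  have supp: "(\<Sum>u<N. G (q u)) = (\<Sum>u\<in>?I. G (q u))" if "pos_homogeneous G" for G
    using sum_slices_support[OF q that] .
  obtain \<beta> where \<beta>: "\<forall>u\<in>?I. \<beta> u \<ge> 0" "(\<Sum>u\<in>?I. \<beta> u *\<^sub>R F (q u)) = (\<Sum>u\<in>?I. F (q u))"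
      "card {u\<in>?I. \<beta> u \<noteq> 0} \<le> DIM('v) + 3"
      "(\<Sum>u\<in>?I. \<beta> u * slice_I12 W (q u)) \<le> (\<Sum>u\<in>?I. slice_I12 W (q u))"
      "(\<Sum>u\<in>?I. slice_I1Y W (q u)) \<le> (\<Sum>u\<in>?I. \<beta> u * slice_I1Y W (q u))"
      "(\<Sum>u\<in>?I. slice_I2Y W (q u)) \<le> (\<Sum>u\<in>?I. \<beta> u * slice_I2Y W (q u))"
      "(\<Sum>u\<in>?I. slice_I12Y W (q u)) - (\<Sum>u\<in>?I. slice_I12 W (q u))
        \<le> (\<Sum>u\<in>?I. \<beta> u * slice_I12Y W (q u)) - (\<Sum>u\<in>?I. \<beta> u * slice_I12 W (q u))"
    using rate_term_reweighting[of ?I "\<lambda>u. F (q u)" c "\<lambda>u. slice_I12 W (q u)" "\<lambda>u. slice_I1Y W (q u)"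
        "\<lambda>u. slice_I2Y W (q u)" "\<lambda>u. slice_I12Y W (q u)"] F_mass
    by auto
  have "(\<Sum>u\<in>?I. \<beta> u * mass (q u)) = (\<Sum>u\<in>?I. \<beta> u *\<^sub>R F (q u)) \<bullet> c"
    by (simp add: inner_sum_left F_mass)
  also have "\<dots> = (\<Sum>u<N. mass (q u))"
    using \<beta>(2) supp[OF pos_homogeneous_mass] by (simp add: inner_sum_left F_mass)
  also have "\<dots> = 1"
    using q by (simp add: is_pmf_ux_def mass_def)
  finally obtain r where r: "is_pmf_ux (card {u\<in>?I. \<beta> u \<noteq> 0}) r"
      "\<forall>G. pos_homogeneous G \<longrightarrow> (\<Sum>i<card {u\<in>?I. \<beta> u \<noteq> 0}. G (r i)) = (\<Sum>u\<in>?I. \<beta> u * G (q u))"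
    using pmf_of_weighted_slices[of ?I \<beta> q] \<beta>(1) is_pmf_ux_nonneg[OF q] by auto
  let ?k = "card {u\<in>?I. \<beta> u \<noteq> 0}"
  have marginal_r: "(\<lambda>a b. \<Sum>i<?k. r i a b) = (\<lambda>a b. \<Sum>u\<in>?I. \<beta> u * q u a b)"
    using r(2)[rule_format, OF pos_homogeneous_eval] by simp
  have marginal_q: "(\<lambda>a b. \<Sum>u<N. q u a b) = (\<lambda>a b. \<Sum>u\<in>?I. 1 * q u a b)"
    using supp[OF pos_homogeneous_eval] by simp
  have "F (\<lambda>a b. \<Sum>i<?k. r i a b) = (\<Sum>u\<in>?I. 1 *\<^sub>R F (q u))"
    unfolding marginal_r F_sum using \<beta>(2) by simp
  also have "\<dots> = F (\<lambda>a b. \<Sum>u<N. q u a b)"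
    unfolding marginal_q F_sum ..
  finally show ?thesis
    using r(1) \<beta>(3-7)
    by (intro exI[of _ ?k] exI[of _ r])
       (unfold r(2)[rule_format, OF pos_homogeneous_slice_cmi] supp[OF pos_homogeneous_slice_cmi], simp)
qed

lemma f_obj_reduce_via_summary:
  fixes W :: "'x1::finite \<Rightarrow> 'x2::finite \<Rightarrow> 'y::finite \<Rightarrow> real"
    and F :: "('x1 \<Rightarrow> 'x2 \<Rightarrow> real) \<Rightarrow> 'v::euclidean_space"
  assumes q: "is_pmf_ux N q"
    and F_sum: "\<And>(I :: nat set) \<beta> s. F (\<lambda>a b. \<Sum>u\<in>I. \<beta> u * s u a b) = (\<Sum>u\<in>I. \<beta> u *\<^sub>R F (s u))"
    and F_mass: "\<And>s. F s \<bullet> c = mass s"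
    and F_info: "\<And>\<pi> \<pi>'. (\<And>a b. \<pi> a b \<ge> 0) \<Longrightarrow> (\<And>a b. \<pi>' a b \<ge> 0) \<Longrightarrow> mass \<pi> = 1 \<Longrightarrow> mass \<pi>' = 1
       \<Longrightarrow> F \<pi> = F \<pi>' \<Longrightarrow> slice_I12Y W \<pi> = slice_I12Y W \<pi>'"
  shows "\<exists>k r. k \<le> DIM('v) + 3 \<and> is_pmf_ux k r \<and> (\<forall>C1 C2. f_obj W N q C1 C2 \<le> f_obj W k r C1 C2)"
proof -
  obtain k r where r: "k \<le> DIM('v) + 3" "is_pmf_ux k r"
      "F (\<lambda>a b. \<Sum>i<k. r i a b) = F (\<lambda>a b. \<Sum>u<N. q u a b)"
      "(\<Sum>i<k. slice_I12 W (r i)) \<le> (\<Sum>u<N. slice_I12 W (q u))"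
      "(\<Sum>u<N. slice_I1Y W (q u)) \<le> (\<Sum>i<k. slice_I1Y W (r i))"
      "(\<Sum>u<N. slice_I2Y W (q u)) \<le> (\<Sum>i<k. slice_I2Y W (r i))"
      "(\<Sum>u<N. slice_I12Y W (q u)) - (\<Sum>u<N. slice_I12 W (q u))
        \<le> (\<Sum>i<k. slice_I12Y W (r i)) - (\<Sum>i<k. slice_I12 W (r i))"
    using slice_reweighting[OF q F_sum F_mass, of W] by blast
  have "slice_I12Y W (\<lambda>a b. \<Sum>u<N. q u a b) = slice_I12Y W (\<lambda>a b. \<Sum>i<k. r i a b)"
    using q r(2) r(3)[symmetric] by (intro F_info is_pmf_ux_marginal_nonneg is_pmf_ux_mass_marginal)
  then have "f_obj W N q C1 C2 \<le> f_obj W k r C1 C2" for C1 C2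
    unfolding f_obj_eq_rate_min[OF is_pmf_ux_pos[OF q]] f_obj_eq_rate_min[OF is_pmf_ux_pos[OF r(2)]]
    using r(4-7) by (intro rate_min_mono) auto
  then show ?thesis using r(1,2) by blast
qed

text \<open>Two summaries of a slice determine \<open>I(X1X2;Y)\<close> of a mixture: the slice itself, and the
  output distribution together with \<open>neg_noise_entropy\<close>. They give the two cardinality bounds.\<close>

lemma f_obj_reduce_input_card:
  fixes W :: "'x1::finite \<Rightarrow> 'x2::finite \<Rightarrow> 'y::finite \<Rightarrow> real"
  assumes "is_pmf_ux N q"
  shows "\<exists>k r. k \<le> CARD('x1) * CARD('x2) + 3 \<and> is_pmf_ux k r \<and> (\<forall>C1 C2. f_obj W N q C1 C2 \<le> f_obj W k r C1 C2)"
proof -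
  let ?F = "\<lambda>s. \<chi> x::'x1 \<times> 'x2. s (fst x) (snd x)"
  have F_sum: "?F (\<lambda>a b. \<Sum>u\<in>I. \<beta> u * s u a b) = (\<Sum>u\<in>I. \<beta> u *\<^sub>R ?F (s u))"
    for I :: "nat set" and \<beta> s
    by (simp add: vec_eq_iff)
  have F_mass: "?F s \<bullet> (\<chi> _. 1) = mass s" for s
    by (simp add: inner_vec_def mass_def sum_UNIV_pair)
  have F_info: "slice_I12Y W \<pi> = slice_I12Y W \<pi>'" if "?F \<pi> = ?F \<pi>'" for \<pi> \<pi>'
  proof -
    from that have "\<pi> = \<pi>'" by (auto simp: vec_eq_iff fun_eq_iff)
    then show ?thesis by simp
  qed
  show ?thesis
    using f_obj_reduce_via_summary[of N q ?F "\<chi> _. 1" W, OF assms F_sum F_mass F_info] by simp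
qed

lemma f_obj_reduce_output_card:
  fixes W :: "'x1::finite \<Rightarrow> 'x2::finite \<Rightarrow> 'y::finite \<Rightarrow> real"
  assumes mac: "is_mac W" and q: "is_pmf_ux N q"
  shows "\<exists>k r. k \<le> CARD('y) + 4 \<and> is_pmf_ux k r \<and> (\<forall>C1 C2. f_obj W N q C1 C2 \<le> f_obj W k r C1 C2)"
proof -
  let ?F = "\<lambda>s. (\<chi> y. out_pmf W s y, neg_noise_entropy W s)"
  have F_sum: "?F (\<lambda>a b. \<Sum>u\<in>I. \<beta> u * s u a b) = (\<Sum>u\<in>I. \<beta> u *\<^sub>R ?F (s u))"
    for I :: "nat set" and \<beta> s
    by (simp add: prod_eq_iff vec_eq_iff fst_sum snd_sum out_pmf_sum neg_noise_entropy_sum)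
  have F_mass: "?F s \<bullet> (\<chi> _. 1, 0) = mass s" for s
    by (simp add: inner_vec_def sum_out_pmf[OF mac])
  have F_info: "slice_I12Y W \<pi> = slice_I12Y W \<pi>'"
    if "\<And>a b. \<pi> a b \<ge> 0" "\<And>a b. \<pi>' a b \<ge> 0" "mass \<pi> = 1" "mass \<pi>' = 1" "?F \<pi> = ?F \<pi>'" for \<pi> \<pi>'
  proof -
    have "out_pmf W \<pi> = out_pmf W \<pi>'" "neg_noise_entropy W \<pi> = neg_noise_entropy W \<pi>'"
      using that(5) by (auto simp: vec_eq_iff)
    then show ?thesis
      using that(1-4) by (simp add: slice_I12Y_eq_mac_info[OF mac] mac_info_def)
  qed
  show ?thesis
    using f_obj_reduce_via_summary[of N q ?F "(\<chi> _. 1, 0)" W, OF q F_sum F_mass F_info]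
    by (simp add: add.commute)
qed

lemma f_obj_reduce_card:
  fixes W :: "'x1::finite \<Rightarrow> 'x2::finite \<Rightarrow> 'y::finite \<Rightarrow> real"
  assumes "is_mac W" "is_pmf_ux N q"
  shows "\<exists>k r. k \<le> U_bound W \<and> is_pmf_ux k r \<and> (\<forall>C1 C2. f_obj W N q C1 C2 \<le> f_obj W k r C1 C2)"
  using f_obj_reduce_input_card[OF assms(2), of W] f_obj_reduce_output_card[OF assms]
  unfolding U_bound_def by (cases "CARD('x1) * CARD('x2) + 3 \<le> CARD('y) + 4") (auto simp: min_def)

lemma convex_comb_Sup_le:
  fixes A B :: "real set"
  assumes A: "A \<noteq> {}" and B: "B \<noteq> {}" and l: "0 < l" "l < 1"
    and le: "\<And>x y. x \<in> A \<Longrightarrow> y \<in> B \<Longrightarrow> l * x + (1 - l) * y \<le> S"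
  shows "l * Sup A + (1 - l) * Sup B \<le> S"
proof -
  have le_A: "l * Sup A + (1 - l) * y \<le> S" if "y \<in> B" for y
  proof -
    have "Sup A \<le> (S - (1 - l) * y) / l"
    proof (rule cSup_least[OF A])
      fix x assume "x \<in> A"
      then have "l * x \<le> S - (1 - l) * y" using le[OF _ that] by force
      then show "x \<le> (S - (1 - l) * y) / l" using l by (simp add: pos_le_divide_eq mult.commute)
    qed
    then show ?thesis using l by (simp add: pos_le_divide_eq mult.commute)
  qed
  have "Sup B \<le> (S - l * Sup A) / (1 - l)"
  proof (rule cSup_least[OF B])
    fix y assume "y \<in> B"
    then have "(1 - l) * y \<le> S - l * Sup A" using le_A by force
    then show "y \<le> (S - l * Sup A) / (1 - l)" using l by (simp add: pos_le_divide_eq mult.commute)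
  qed
  then show ?thesis using l by (simp add: pos_le_divide_eq mult.commute)
qed

lemma ex_is_pmf_ux_1: "\<exists>p :: nat \<Rightarrow> 'x1::finite \<Rightarrow> 'x2::finite \<Rightarrow> real. is_pmf_ux 1 p"
proof
  show "is_pmf_ux 1 (\<lambda>u (a :: 'x1) (b :: 'x2). if u = 0 then 1 / (CARD('x1) * CARD('x2)) else 0)"
    by (simp add: is_pmf_ux_def)
qed

lemma f_obj_le_f_l:
  fixes W :: "'x1::finite \<Rightarrow> 'x2::finite \<Rightarrow> 'y::finite \<Rightarrow> real"
  assumes mac: "is_mac W" and k: "k \<le> U_bound W" "is_pmf_ux k p"
  shows "f_obj W k p (fst C) (snd C) \<le> f_l W C"
  unfolding f_l_def
proof (rule cSup_upper)
  show "f_obj W k p (fst C) (snd C)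
      \<in> {f_obj W k p (fst C) (snd C) |k p. 1 \<le> k \<and> k \<le> U_bound W \<and> is_pmf_ux k p}"
    using k is_pmf_ux_pos[OF k(2)] by blast
  show "bdd_above {f_obj W k p (fst C) (snd C) |k p. 1 \<le> k \<and> k \<le> U_bound W \<and> is_pmf_ux k p}"
    using f_obj_le_card_div_ln2[OF mac] by (intro bdd_aboveI[of _ "CARD('y) / ln 2"]) blast
qed

lemma f_l_time_share:
  fixes W :: "'x1::finite \<Rightarrow> 'x2::finite \<Rightarrow> 'y::finite \<Rightarrow> real"
  assumes mac: "is_mac W" and p: "is_pmf_ux k p" and p': "is_pmf_ux k' p'" and l: "0 \<le> l" "l \<le> 1"
  shows "l * f_obj W k p (fst C) (snd C) + (1 - l) * f_obj W k' p' (fst C') (snd C')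
    \<le> f_l W (l *\<^sub>R C + (1 - l) *\<^sub>R C')"
proof -
  let ?q = "time_share l k p p'"
  obtain k'' r where r: "k'' \<le> U_bound W" "is_pmf_ux k'' r"
      "\<forall>C1 C2. f_obj W (k + k') ?q C1 C2 \<le> f_obj W k'' r C1 C2"
    using f_obj_reduce_card[OF mac is_pmf_ux_time_share[OF p p' l]] by blast
  have "l * f_obj W k p (fst C) (snd C) + (1 - l) * f_obj W k' p' (fst C') (snd C')
      \<le> f_obj W (k + k') ?q (fst (l *\<^sub>R C + (1 - l) *\<^sub>R C')) (snd (l *\<^sub>R C + (1 - l) *\<^sub>R C'))"
    using f_obj_time_share[OF mac p p' l] by simp
  also have "\<dots> \<le> f_obj W k'' r (fst (l *\<^sub>R C + (1 - l) *\<^sub>R C')) (snd (l *\<^sub>R C + (1 - l) *\<^sub>R C'))"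
    using r(3) by blast
  also have "\<dots> \<le> f_l W (l *\<^sub>R C + (1 - l) *\<^sub>R C')"
    by (rule f_obj_le_f_l[OF mac r(1,2)])
  finally show ?thesis .
qed

lemma f_l_convex_comb:
  fixes W :: "'x1::finite \<Rightarrow> 'x2::finite \<Rightarrow> 'y::finite \<Rightarrow> real"
  assumes mac: "is_mac W" and l: "0 < l" "l < 1"
  shows "l * f_l W C + (1 - l) * f_l W C' \<le> f_l W (l *\<^sub>R C + (1 - l) *\<^sub>R C')"
proof -
  have ne: "{f_obj W k p (fst C) (snd C) |k p. 1 \<le> k \<and> k \<le> U_bound W \<and> is_pmf_ux k p} \<noteq> {}" for C
  proof -
    have "1 \<le> U_bound W" by (simp add: U_bound_def)
    then show ?thesis using ex_is_pmf_ux_1 by blast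
  qed
  show ?thesis
    unfolding f_l_def[of W C] f_l_def[of W C']
    using l by (intro convex_comb_Sup_le[OF ne ne l]) (auto intro!: f_l_time_share[OF mac])
qed

theorem proposition1:
  fixes W :: "'x1::finite \<Rightarrow> 'x2::finite \<Rightarrow> 'y::finite \<Rightarrow> real"
  assumes "is_mac W"
  shows "concave_on {C. fst C \<ge> 0 \<and> snd C \<ge> 0} (f_l W)"
proof -
  have "concave_on UNIV (f_l W)"
    unfolding concave_on_iff
  proof (intro conjI ballI allI impI convex_UNIV)
    fix C C' :: "real \<times> real" and u v :: real
    assume "0 \<le> u" "0 \<le> v" "u + v = 1"
    then consider "u = 0" "v = 1" | "u = 1" "v = 0" | "0 < u" "u < 1" "v = 1 - u"
      by fastforce
    then show "u * f_l W C + v * f_l W C' \<le> f_l W (u *\<^sub>R C + v *\<^sub>R C')"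
      by cases (auto intro: f_l_convex_comb[OF assms])
  qed
  moreover have "convex {C :: real \<times> real. fst C \<ge> 0 \<and> snd C \<ge> 0}"
    unfolding convex_def by auto
  ultimately show ?thesis
    unfolding concave_on_def by (blast intro: convex_on_subset)
qed

end
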